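(* Let $G$ be ${\mathbb Z}_{\geq 0}$ or ${\mathbb Z}$. Let $X,Y$ be compact Hausdorff spaces and $T:X\to X$, $S:Y\to Y$ surjective continuous maps (homeomorphisms if $G={\mathbb Z}$). Then for every $k\in{\mathbb N}$, \[{\rm IE}_k(X\times Y,T\times S)={\rm IE}_k(X,T)\times{\rm IE}_k(Y,S),\] where $(X\times Y)^k$ is identified with $X^k\times Y^k$ in the natural way.
   Context: For a compact Hausdorff space $Z$ with surjective continuous map $R$ and $G$ acting by $n\cdot z=R^nz$: for a tuple $(A_1,\dots,A_k)$ of subsets of $Z$, a set $J\subseteq G$ is an independence set if for every nonempty finite $I\subseteq J$ and every $\sigma:I\to\{1,\dots,k\}$, $\bigcap_{s\in I}R^{-s}A_{\sigma(s)}\neq\emptyset$. A set $I\subseteq{\mathbb Z}$ has positive density if $\lim_{n}|I\cap\{-n,\dots,n\}|/(2n+1)$ exists and is nonzero; $I\subseteq{\mathbb Z}_{\ge0}$ has positive density if $\lim_n|I\cap\{0,\dots,n\}|/(n+1)$ exists and is nonzero. ${\rm IE}_k(Z,R)$ is the set of tuples $(z_1,\dots,z_k)\in Z^k$ such that for every product neighbourhood $U_1\times\cdots\times U_k$ of it, $(U_1,\dots,U_k)$ has an independence set of positive density. *)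

theory Defs
  imports "HOL-Analysis.Analysis"
begin

definition int_act :: "('a \<Rightarrow> 'a) \<Rightarrow> int \<Rightarrow> 'a \<Rightarrow> 'a" where
  "int_act R n = (if n \<ge> 0 then R ^^ nat n else (inv R) ^^ nat (- n))"

text \<open>k-tuples of sets are lists of length k; a map \<sigma> : I \<rightarrow> {1..k} is encoded
  as a map into indices < k. R^{-s} A is the preimage of A under the action of s.\<close>

definition indep_set_nat :: "('a \<Rightarrow> 'a) \<Rightarrow> 'a set list \<Rightarrow> nat set \<Rightarrow> bool" where
  "indep_set_nat R As J \<longleftrightarrow>
     (\<forall>I (\<sigma>::nat \<Rightarrow> nat). finite I \<and> I \<noteq> {} \<and> I \<subseteq> J \<and> (\<forall>s\<in>I. \<sigma> s < length As) \<longrightarrow>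
        (\<Inter>s\<in>I. (R ^^ s) -` (As ! \<sigma> s)) \<noteq> {})"

definition indep_set_int :: "('a \<Rightarrow> 'a) \<Rightarrow> 'a set list \<Rightarrow> int set \<Rightarrow> bool" where
  "indep_set_int R As J \<longleftrightarrow>
     (\<forall>I (\<sigma>::int \<Rightarrow> nat). finite I \<and> I \<noteq> {} \<and> I \<subseteq> J \<and> (\<forall>s\<in>I. \<sigma> s < length As) \<longrightarrow>
        (\<Inter>s\<in>I. (int_act R s) -` (As ! \<sigma> s)) \<noteq> {})"

definition pos_density_nat :: "nat set \<Rightarrow> bool" where
  "pos_density_nat I \<longleftrightarrow>
     (\<exists>d. d \<noteq> 0 \<and> (\<lambda>n. real (card (I \<inter> {0..n})) / real (n + 1)) \<longlonglongrightarrow> d)"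

definition pos_density_int :: "int set \<Rightarrow> bool" where
  "pos_density_int I \<longleftrightarrow>
     (\<exists>d. d \<noteq> 0 \<and>
        (\<lambda>n::nat. real (card (I \<inter> {- int n..int n})) / real (2 * n + 1)) \<longlonglongrightarrow> d)"

definition IE_nat :: "nat \<Rightarrow> ('a::topological_space \<Rightarrow> 'a) \<Rightarrow> 'a list set" where
  "IE_nat k R = {zs. length zs = k \<and>
     (\<forall>Us. length Us = k \<and> (\<forall>i<k. open (Us ! i) \<and> zs ! i \<in> Us ! i) \<longrightarrow>
        (\<exists>J. indep_set_nat R Us J \<and> pos_density_nat J))}"

definition IE_int :: "nat \<Rightarrow> ('a::topological_space \<Rightarrow> 'a) \<Rightarrow> 'a list set" where
  "IE_int k R = {zs. length zs = k \<and>
     (\<forall>Us. length Us = k \<and> (\<forall>i<k. open (Us ! i) \<and> zs ! i \<in> Us ! i) \<longrightarrow>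
        (\<exists>J. indep_set_int R Us J \<and> pos_density_int J))}"

end

theory Submission
  imports Defs "HOL-Real_Asymp.Real_Asymp"
begin

(* Independence sets of positive density for the product system project to independence sets
   for the factors, which gives one inclusion. Conversely, given neighbourhoods U_i x V_i of a
   pair of IE-tuples, take independence sets J1 for (U_i) and J2 for (V_i) of positive density.
   Averaging over translates gives, for every n, translates of J1 and J2 whose intersection has
   at least c n points in [0, n), for a fixed c > 0; such an intersection is independent for
   both tuples, hence for the product tuple. The family of subsets of N that are independent
   for both tuples is closed under subsets and translations and has finite character. By
   subadditivity its maximal counts on [0, n) grow like d n with d >= c; a rising-sun argument
   yields members with at least d a - sqrt a points in [0, a) for all a up to any bound, and a
   Koenig-type compactness argument yields one member doing so for all a, which therefore has
   density d. For G = Z the windows are [-M, M], and translating back into N uses that the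
   maps are invertible. *)

section \<open>Independence sets along an action\<close>

definition indep_wrt :: "('i \<Rightarrow> 'a \<Rightarrow> 'a) \<Rightarrow> 'a set list \<Rightarrow> 'i set \<Rightarrow> bool" where
  "indep_wrt act As J \<longleftrightarrow>
     (\<forall>I (\<sigma>::'i \<Rightarrow> nat). finite I \<and> I \<noteq> {} \<and> I \<subseteq> J \<and> (\<forall>s\<in>I. \<sigma> s < length As) \<longrightarrow>
        (\<Inter>s\<in>I. act s -` (As ! \<sigma> s)) \<noteq> {})"

lemma indep_set_nat_eq_indep_wrt: "indep_set_nat R = indep_wrt (\<lambda>n. R ^^ n)"
  by (intro ext) (simp add: indep_set_nat_def indep_wrt_def)

lemma indep_set_int_eq_indep_wrt: "indep_set_int R = indep_wrt (int_act R)"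
  by (intro ext) (simp add: indep_set_int_def indep_wrt_def)

lemma indep_wrtI:
  assumes "\<And>I \<sigma>. finite I \<Longrightarrow> I \<noteq> {} \<Longrightarrow> I \<subseteq> J \<Longrightarrow> (\<And>s. s \<in> I \<Longrightarrow> \<sigma> s < length As) \<Longrightarrow>
    \<exists>x. \<forall>s\<in>I. act s x \<in> As ! \<sigma> s"
  shows "indep_wrt act As J"
  unfolding indep_wrt_def
proof (intro allI impI)
  fix I and \<sigma> :: "_ \<Rightarrow> nat"
  assume "finite I \<and> I \<noteq> {} \<and> I \<subseteq> J \<and> (\<forall>s\<in>I. \<sigma> s < length As)"
  then obtain x where "\<forall>s\<in>I. act s x \<in> As ! \<sigma> s" using assms by meson
  then show "(\<Inter>s\<in>I. act s -` (As ! \<sigma> s)) \<noteq> {}" by blast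
qed

lemma indep_wrtD:
  assumes "indep_wrt act As J" "finite I" "I \<noteq> {}" "I \<subseteq> J" "\<And>s. s \<in> I \<Longrightarrow> \<sigma> s < length As"
  obtains x where "\<And>s. s \<in> I \<Longrightarrow> act s x \<in> As ! \<sigma> s"
proof -
  have "(\<Inter>s\<in>I. act s -` (As ! \<sigma> s)) \<noteq> {}"
    using assms unfolding indep_wrt_def by blast
  then show thesis using that by blast
qed

lemma indep_wrt_subset: "indep_wrt act As J \<Longrightarrow> J' \<subseteq> J \<Longrightarrow> indep_wrt act As J'"
  unfolding indep_wrt_def by blast

lemma indep_wrt_finite_character:
  "(\<And>F. finite F \<Longrightarrow> F \<subseteq> J \<Longrightarrow> indep_wrt act As F) \<Longrightarrow> indep_wrt act As J"
  unfolding indep_wrt_def by blast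

lemma indep_wrt_comp_of_image:
  assumes "inj_on f K" and ind: "indep_wrt act As (f ` K)"
  shows "indep_wrt (act \<circ> f) As K"
proof (rule indep_wrtI)
  fix I and \<sigma> :: "_ \<Rightarrow> nat"
  assume I: "finite I" "I \<noteq> {}" "I \<subseteq> K" "\<And>s. s \<in> I \<Longrightarrow> \<sigma> s < length As"
  have inj: "inj_on f I" by (rule inj_on_subset[OF assms(1) I(3)])
  obtain x where x: "\<And>s'. s' \<in> f ` I \<Longrightarrow> act s' x \<in> As ! \<sigma> (the_inv_into I f s')"
  proof (rule indep_wrtD[OF ind, of "f ` I" "\<lambda>s'. \<sigma> (the_inv_into I f s')"])
    show "finite (f ` I)" "f ` I \<noteq> {}" "f ` I \<subseteq> f ` K" using I by auto
    show "\<sigma> (the_inv_into I f s') < length As" if "s' \<in> f ` I" for s'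
      using that I(4) the_inv_into_f_f[OF inj] by auto
  qed (rule that)
  have "(act \<circ> f) s x \<in> As ! \<sigma> s" if "s \<in> I" for s
    using x[of "f s"] the_inv_into_f_f[OF inj that] that by simp
  then show "\<exists>x. \<forall>s\<in>I. (act \<circ> f) s x \<in> As ! \<sigma> s" by blast
qed

lemma indep_wrt_image_of_comp:
  assumes "inj_on f K" and ind: "indep_wrt (act \<circ> f) As K"
  shows "indep_wrt act As (f ` K)"
proof (rule indep_wrtI)
  fix I and \<sigma> :: "_ \<Rightarrow> nat"
  assume I: "finite I" "I \<noteq> {}" "I \<subseteq> f ` K" "\<And>s. s \<in> I \<Longrightarrow> \<sigma> s < length As"
  define I' where "I' = K \<inter> f -` I"
  have image: "f ` I' = I" using I(3) unfolding I'_def by blast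
  have "inj_on f I'" by (rule inj_on_subset[OF assms(1)]) (simp add: I'_def)
  then have "finite I'" using finite_imageD[of f I'] image I(1) by simp
  obtain x where x: "\<And>s. s \<in> I' \<Longrightarrow> (act \<circ> f) s x \<in> As ! \<sigma> (f s)"
  proof (rule indep_wrtD[OF ind \<open>finite I'\<close>, of "\<lambda>s. \<sigma> (f s)"])
    show "I' \<noteq> {}" using image I(2) by blast
    show "I' \<subseteq> K" by (simp add: I'_def)
    show "\<sigma> (f s) < length As" if "s \<in> I'" for s using that I(4) image by blast
  qed (rule that)
  have "act s x \<in> As ! \<sigma> s" if s: "s \<in> I" for s
  proof -
    obtain s' where "s' \<in> I'" "s = f s'" using s image by blast
    then show ?thesis using x[of s'] by simp
  qed
  then show "\<exists>x. \<forall>s\<in>I. act s x \<in> As ! \<sigma> s" by blast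
qed

lemma indep_wrt_comp_right:
  assumes "indep_wrt (\<lambda>s. act s \<circ> g) As J"
  shows "indep_wrt act As J"
proof (rule indep_wrtI)
  fix I and \<sigma> :: "_ \<Rightarrow> nat"
  assume I: "finite I" "I \<noteq> {}" "I \<subseteq> J" "\<And>s. s \<in> I \<Longrightarrow> \<sigma> s < length As"
  obtain x where "\<And>s. s \<in> I \<Longrightarrow> (act s \<circ> g) x \<in> As ! \<sigma> s"
    using indep_wrtD[where \<sigma> = \<sigma>, OF assms I] by blast
  then show "\<exists>x. \<forall>s\<in>I. act s x \<in> As ! \<sigma> s" by auto
qed

lemma indep_wrt_shift:
  fixes e :: "nat \<Rightarrow> 'i::cancel_semigroup_add"
  assumes "indep_wrt act As J" "inj e" "\<And>i. act (e i + u) = act (e i) \<circ> act u"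
  shows "indep_wrt (act \<circ> e) As {i. e i + u \<in> J}"
proof -
  let ?K = "{i. e i + u \<in> J}"
  have "inj_on (\<lambda>i. e i + u) ?K" using assms(2) by (auto simp: inj_on_def dest: injD)
  moreover have "indep_wrt act As ((\<lambda>i. e i + u) ` ?K)"
    by (rule indep_wrt_subset[OF assms(1)]) blast
  ultimately have "indep_wrt (act \<circ> (\<lambda>i. e i + u)) As ?K"
    by (rule indep_wrt_comp_of_image)
  then have "indep_wrt (\<lambda>i. act (e i) \<circ> act u) As ?K"
    by (simp add: comp_def assms(3))
  then show ?thesis using indep_wrt_comp_right[of "act \<circ> e" "act u" As] by (simp add: comp_def)
qed

lemma indep_wrt_shift_nat:
  fixes act :: "nat \<Rightarrow> 'a \<Rightarrow> 'a"
  assumes "indep_wrt act As J" "\<And>i. act (i + t) = act i \<circ> act t"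
  shows "indep_wrt act As {i. i + t \<in> J}"
  using indep_wrt_shift[where e = "\<lambda>i. i", OF assms(1) inj_on_id2[of UNIV] assms(2)] by (simp add: comp_def)

lemma indep_wrt_factor:
  assumes "indep_wrt act As J" "length Bs = length As"
    and "\<And>s. act' s \<circ> f = f \<circ> act s" and "\<And>i. i < length As \<Longrightarrow> As ! i \<subseteq> f -` (Bs ! i)"
  shows "indep_wrt act' Bs J"
proof (rule indep_wrtI)
  fix I and \<sigma> :: "_ \<Rightarrow> nat"
  assume I: "finite I" "I \<noteq> {}" "I \<subseteq> J" "\<And>s. s \<in> I \<Longrightarrow> \<sigma> s < length Bs"
  then have "\<And>s. s \<in> I \<Longrightarrow> \<sigma> s < length As" using assms(2) by simp
  then obtain x where x: "\<And>s. s \<in> I \<Longrightarrow> act s x \<in> As ! \<sigma> s"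
    using indep_wrtD[where \<sigma> = \<sigma>, OF assms(1) I(1-3)] by blast
  have "act' s (f x) \<in> Bs ! \<sigma> s" if "s \<in> I" for s
  proof -
    have "f (act s x) \<in> Bs ! \<sigma> s" using x[OF that] assms(4) I(4)[OF that] assms(2) by auto
    moreover have "act' s (f x) = f (act s x)" using assms(3)[of s] by (simp add: fun_eq_iff)
    ultimately show ?thesis by simp
  qed
  then show "\<exists>y. \<forall>s\<in>I. act' s y \<in> Bs ! \<sigma> s" by blast
qed

lemma indep_wrt_mono:
  assumes "indep_wrt act As J" "length Bs = length As" "\<And>i. i < length As \<Longrightarrow> As ! i \<subseteq> Bs ! i"
  shows "indep_wrt act Bs J"
proof (rule indep_wrt_factor[OF assms(1,2)])
  show "act s \<circ> id = id \<circ> act s" for s by simp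
  show "As ! i \<subseteq> id -` (Bs ! i)" if "i < length As" for i using assms(3)[OF that] by simp
qed

lemma indep_wrt_map2_times_mono:
  assumes "length Us = k" "length Vs = k" "length Ws = k" "\<And>i. i < k \<Longrightarrow> Us ! i \<times> Vs ! i \<subseteq> Ws ! i"
    and "indep_wrt act (map2 (\<times>) Us Vs) J"
  shows "indep_wrt act Ws J"
  by (rule indep_wrt_mono[OF assms(5)]) (use assms(1-4) in auto)

lemma indep_wrt_fst:
  assumes "indep_wrt (\<lambda>s. map_prod (act1 s) (act2 s)) (map (\<lambda>U. U \<times> UNIV) Us) J"
  shows "indep_wrt act1 Us J"
proof (rule indep_wrt_factor[OF assms])
  show "act1 s \<circ> fst = fst \<circ> map_prod (act1 s) (act2 s)" for s by (simp add: fun_eq_iff)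
qed (auto simp: vimage_fst)

lemma indep_wrt_snd:
  assumes "indep_wrt (\<lambda>s. map_prod (act1 s) (act2 s)) (map (\<lambda>V. UNIV \<times> V) Vs) J"
  shows "indep_wrt act2 Vs J"
proof (rule indep_wrt_factor[OF assms])
  show "act2 s \<circ> snd = snd \<circ> map_prod (act1 s) (act2 s)" for s by (simp add: fun_eq_iff)
qed (auto simp: vimage_snd)

lemma indep_wrt_product:
  assumes "indep_wrt act1 Us J" "indep_wrt act2 Vs J" "length Us = length Vs"
  shows "indep_wrt (\<lambda>s. map_prod (act1 s) (act2 s)) (map2 (\<times>) Us Vs) J"
proof (rule indep_wrtI)
  fix I and \<sigma> :: "_ \<Rightarrow> nat"
  assume I: "finite I" "I \<noteq> {}" "I \<subseteq> J" "\<And>s. s \<in> I \<Longrightarrow> \<sigma> s < length (map2 (\<times>) Us Vs)"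
  then have \<sigma>: "\<And>s. s \<in> I \<Longrightarrow> \<sigma> s < length Us" "\<And>s. s \<in> I \<Longrightarrow> \<sigma> s < length Vs"
    using assms(3) by auto
  obtain x where x: "\<And>s. s \<in> I \<Longrightarrow> act1 s x \<in> Us ! \<sigma> s"
    using indep_wrtD[where \<sigma> = \<sigma>, OF assms(1) I(1-3) \<sigma>(1)] by blast
  obtain y where y: "\<And>s. s \<in> I \<Longrightarrow> act2 s y \<in> Vs ! \<sigma> s"
    using indep_wrtD[where \<sigma> = \<sigma>, OF assms(2) I(1-3) \<sigma>(2)] by blast
  have "map_prod (act1 s) (act2 s) (x, y) \<in> map2 (\<times>) Us Vs ! \<sigma> s" if "s \<in> I" for s
    using x[OF that] y[OF that] \<sigma>[OF that] by simp
  then show "\<exists>p. \<forall>s\<in>I. map_prod (act1 s) (act2 s) p \<in> map2 (\<times>) Us Vs ! \<sigma> s" by blast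
qed

section \<open>Iterates of maps\<close>

lemma funpow_map_prod:
  fixes T :: "'a \<Rightarrow> 'a" and S :: "'b \<Rightarrow> 'b"
  shows "map_prod T S ^^ n = map_prod (T ^^ n) (S ^^ n)"
  by (induction n) (simp_all add: fun_eq_iff)

lemma int_act_of_nat: "int_act R (int n) = R ^^ n"
  by (simp add: int_act_def)

lemma int_act_succ:
  assumes "bij R"
  shows "int_act R (n + 1) = R \<circ> int_act R n"
proof (cases "n \<ge> 0")
  case True
  then have "nat (n + 1) = Suc (nat n)" by simp
  then show ?thesis using True by (simp add: int_act_def)
next
  case False
  define m where "m = nat (- (n + 1))"
  have "int_act R (n + 1) = inv R ^^ m"
    using False unfolding int_act_def m_def by auto
  moreover have "nat (- n) = Suc m" using False unfolding m_def by simp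
  then have "int_act R n = inv R \<circ> inv R ^^ m"
    using False unfolding int_act_def by simp
  moreover have "R \<circ> inv R = id" using assms bij_is_surj surj_iff by blast
  ultimately show ?thesis by (simp add: comp_assoc[symmetric])
qed

lemma int_act_pred:
  assumes "bij R"
  shows "int_act R (n - 1) = inv R \<circ> int_act R n"
proof -
  have "int_act R n = R \<circ> int_act R (n - 1)" using int_act_succ[OF assms, of "n - 1"] by simp
  moreover have "inv R \<circ> R = id" using assms bij_is_inj inj_iff by blast
  ultimately show ?thesis by (simp add: comp_assoc[symmetric])
qed

lemma int_act_add:
  assumes "bij R"
  shows "int_act R (a + b) = int_act R a \<circ> int_act R b"
proof (induction a rule: int_induct[where k = 0])
  case base
  then show ?case by (simp add: int_act_def)
next
  case (step1 i)
  have "int_act R (i + 1 + b) = R \<circ> int_act R (i + b)"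
    using int_act_succ[OF assms, of "i + b"] by (simp add: add.commute add.left_commute)
  then show ?case using step1 int_act_succ[OF assms, of i] by (simp add: comp_assoc)
next
  case (step2 i)
  have "int_act R (i - 1 + b) = inv R \<circ> int_act R (i + b)"
    using int_act_pred[OF assms, of "i + b"] by (simp add: algebra_simps)
  then show ?case using step2 int_act_pred[OF assms, of i] by (simp add: comp_assoc)
qed

lemma int_act_map_prod:
  assumes "bij T" "bij S"
  shows "int_act (map_prod T S) = (\<lambda>n. map_prod (int_act T n) (int_act S n))"
proof -
  have inv_map_prod: "inv (map_prod T S) = map_prod (inv T) (inv S)"
  proof (rule inv_unique_comp)
    show "map_prod T S \<circ> map_prod (inv T) (inv S) = id"
      using assms by (auto simp: fun_eq_iff surj_f_inv_f bij_is_surj)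
    show "map_prod (inv T) (inv S) \<circ> map_prod T S = id"
      using assms by (auto simp: fun_eq_iff inv_f_f bij_is_inj)
  qed
  show ?thesis unfolding int_act_def inv_map_prod funpow_map_prod by (simp add: fun_eq_iff)
qed

section \<open>Tuples all of whose product neighbourhoods have a property\<close>

definition IE_with :: "nat \<Rightarrow> ('a::topological_space set list \<Rightarrow> bool) \<Rightarrow> 'a list set" where
  "IE_with k \<Phi> = {zs. length zs = k \<and>
     (\<forall>Us. length Us = k \<and> (\<forall>i<k. open (Us ! i) \<and> zs ! i \<in> Us ! i) \<longrightarrow> \<Phi> Us)}"

lemma IE_nat_eq_IE_with:
  "IE_nat k R = IE_with k (\<lambda>Us. \<exists>J. indep_wrt (\<lambda>n. R ^^ n) Us J \<and> pos_density_nat J)"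
  by (simp add: IE_nat_def IE_with_def indep_set_nat_eq_indep_wrt)

lemma IE_int_eq_IE_with:
  "IE_int k R = IE_with k (\<lambda>Us. \<exists>J. indep_wrt (int_act R) Us J \<and> pos_density_int J)"
  by (simp add: IE_int_def IE_with_def indep_set_int_eq_indep_wrt)

lemma IE_withI:
  assumes "length zs = k"
    and "\<And>Us. length Us = k \<Longrightarrow> (\<And>i. i < k \<Longrightarrow> open (Us ! i)) \<Longrightarrow>
      (\<And>i. i < k \<Longrightarrow> zs ! i \<in> Us ! i) \<Longrightarrow> \<Phi> Us"
  shows "zs \<in> IE_with k \<Phi>"
  using assms unfolding IE_with_def by blast

lemma IE_withD:
  assumes "zs \<in> IE_with k \<Phi>" "length Us = k"
    "\<And>i. i < k \<Longrightarrow> open (Us ! i)" "\<And>i. i < k \<Longrightarrow> zs ! i \<in> Us ! i"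
  shows "\<Phi> Us"
  using assms unfolding IE_with_def by blast

lemma length_IE_with: "zs \<in> IE_with k \<Phi> \<Longrightarrow> length zs = k"
  by (simp add: IE_with_def)

lemma IE_with_map:
  assumes zs: "zs \<in> IE_with k \<Phi>" and f: "continuous_on UNIV f"
    and \<Phi>\<Psi>: "\<And>Us. length Us = k \<Longrightarrow> \<Phi> (map ((-`) f) Us) \<Longrightarrow> \<Psi> Us"
  shows "map f zs \<in> IE_with k \<Psi>"
proof (rule IE_withI)
  show "length (map f zs) = k" using length_IE_with[OF zs] by simp
  fix Us assume Us: "length Us = k" "\<And>i. i < k \<Longrightarrow> open (Us ! i)"
    "\<And>i. i < k \<Longrightarrow> map f zs ! i \<in> Us ! i"
  have "\<Phi> (map ((-`) f) Us)"
  proof (rule IE_withD[OF zs])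
    show "length (map ((-`) f) Us) = k" using Us(1) by simp
    show "open (map ((-`) f) Us ! i)" if "i < k" for i
      using open_vimage[OF Us(2)[OF that] f] that Us(1) by simp
    show "zs ! i \<in> map ((-`) f) Us ! i" if "i < k" for i
      using Us(3)[OF that] that Us(1) length_IE_with[OF zs] by simp
  qed
  then show "\<Psi> Us" using \<Phi>\<Psi> Us(1) by blast
qed

lemma IE_with_zip:
  assumes xs: "xs \<in> IE_with k \<Phi>1" and ys: "ys \<in> IE_with k \<Phi>2"
    and combine: "\<And>Us Vs Ws. length Us = k \<Longrightarrow> length Vs = k \<Longrightarrow> length Ws = k \<Longrightarrow>
      (\<And>i. i < k \<Longrightarrow> Us ! i \<times> Vs ! i \<subseteq> Ws ! i) \<Longrightarrow> \<Phi>1 Us \<Longrightarrow> \<Phi>2 Vs \<Longrightarrow> \<Phi> Ws"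
  shows "zip xs ys \<in> IE_with k \<Phi>"
proof (rule IE_withI)
  have len: "length xs = k" "length ys = k" using xs ys by (simp_all add: length_IE_with)
  then show "length (zip xs ys) = k" by simp
  fix Ws assume Ws: "length Ws = k" "\<And>i. i < k \<Longrightarrow> open (Ws ! i)"
    "\<And>i. i < k \<Longrightarrow> zip xs ys ! i \<in> Ws ! i"
  have "\<forall>i\<in>{..<k}. \<exists>AB. open (fst AB) \<and> open (snd AB) \<and> xs ! i \<in> fst AB \<and> ys ! i \<in> snd AB
      \<and> fst AB \<times> snd AB \<subseteq> Ws ! i"
  proof
    fix i assume "i \<in> {..<k}"
    then have "open (Ws ! i)" "(xs ! i, ys ! i) \<in> Ws ! i" using Ws len by auto
    then obtain A B where "open A" "open B" "(xs ! i, ys ! i) \<in> A \<times> B" "A \<times> B \<subseteq> Ws ! i"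
      by (rule open_prod_elim)
    then show "\<exists>AB. open (fst AB) \<and> open (snd AB) \<and> xs ! i \<in> fst AB \<and> ys ! i \<in> snd AB
      \<and> fst AB \<times> snd AB \<subseteq> Ws ! i" by (intro exI[of _ "(A, B)"]) simp
  qed
  then obtain AB where AB: "\<And>i. i < k \<Longrightarrow> open (fst (AB i)) \<and> open (snd (AB i))
      \<and> xs ! i \<in> fst (AB i) \<and> ys ! i \<in> snd (AB i) \<and> fst (AB i) \<times> snd (AB i) \<subseteq> Ws ! i"
    using bchoice[of "{..<k}"] by (metis lessThan_iff)
  define Us where "Us = map (fst \<circ> AB) [0..<k]"
  define Vs where "Vs = map (snd \<circ> AB) [0..<k]"
  have "\<Phi>1 Us" by (rule IE_withD[OF xs]) (use AB in \<open>simp_all add: Us_def\<close>)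
  moreover have "\<Phi>2 Vs" by (rule IE_withD[OF ys]) (use AB in \<open>simp_all add: Vs_def\<close>)
  ultimately show "\<Phi> Ws" by (rule combine[rotated 4]) (use Ws AB in \<open>simp_all add: Us_def Vs_def\<close>)
qed

lemma IE_with_product:
  fixes \<Phi> :: "('a::topological_space \<times> 'b::topological_space) set list \<Rightarrow> bool"
  assumes fst: "\<And>Us. length Us = k \<Longrightarrow> \<Phi> (map (\<lambda>U. U \<times> UNIV) Us) \<Longrightarrow> \<Phi>1 Us"
    and snd: "\<And>Vs. length Vs = k \<Longrightarrow> \<Phi> (map (\<lambda>V. UNIV \<times> V) Vs) \<Longrightarrow> \<Phi>2 Vs"
    and combine: "\<And>Us Vs Ws. length Us = k \<Longrightarrow> length Vs = k \<Longrightarrow> length Ws = k \<Longrightarrow>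
      (\<And>i. i < k \<Longrightarrow> Us ! i \<times> Vs ! i \<subseteq> Ws ! i) \<Longrightarrow> \<Phi>1 Us \<Longrightarrow> \<Phi>2 Vs \<Longrightarrow> \<Phi> Ws"
  shows "(\<lambda>zs. (map fst zs, map snd zs)) ` IE_with k \<Phi> = IE_with k \<Phi>1 \<times> IE_with k \<Phi>2"
proof (intro equalityI subsetI)
  fix p assume "p \<in> (\<lambda>zs. (map fst zs, map snd zs)) ` IE_with k \<Phi>"
  then obtain zs where zs: "zs \<in> IE_with k \<Phi>" "p = (map fst zs, map snd zs)" by blast
  have "map fst zs \<in> IE_with k \<Phi>1"
  proof (rule IE_with_map[OF zs(1) continuous_on_fst[OF continuous_on_id]])
    show "\<Phi>1 Us" if "length Us = k" "\<Phi> (map ((-`) fst) Us)" for Us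
      using fst[OF that(1) that(2)[unfolded vimage_fst[abs_def]]] .
  qed
  moreover have "map snd zs \<in> IE_with k \<Phi>2"
  proof (rule IE_with_map[OF zs(1) continuous_on_snd[OF continuous_on_id]])
    show "\<Phi>2 Vs" if "length Vs = k" "\<Phi> (map ((-`) snd) Vs)" for Vs
      using snd[OF that(1) that(2)[unfolded vimage_snd[abs_def]]] .
  qed
  ultimately show "p \<in> IE_with k \<Phi>1 \<times> IE_with k \<Phi>2" using zs(2) by simp
next
  fix p assume "p \<in> IE_with k \<Phi>1 \<times> IE_with k \<Phi>2"
  then obtain xs ys where p: "p = (xs, ys)" and xs: "xs \<in> IE_with k \<Phi>1" and ys: "ys \<in> IE_with k \<Phi>2"
    by blast
  have "p = (map fst (zip xs ys), map snd (zip xs ys))"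
    using p length_IE_with[OF xs] length_IE_with[OF ys] by simp
  moreover have "zip xs ys \<in> IE_with k \<Phi>" using xs ys by (rule IE_with_zip) (rule combine)
  ultimately show "p \<in> (\<lambda>zs. (map fst zs, map snd zs)) ` IE_with k \<Phi>" by blast
qed

section \<open>Families of sets of naturals closed under subsets and translations\<close>

definition initial_count :: "nat set \<Rightarrow> nat \<Rightarrow> nat" where
  "initial_count K n = card (K \<inter> {..<n})"

lemma initial_count_le: "initial_count K n \<le> n"
  unfolding initial_count_def by (metis card_lessThan card_mono finite_lessThan inf_le2)

lemma initial_count_add:
  "initial_count K (a + b) = initial_count K a + initial_count {j. j + a \<in> K} b"
proof -
  have "K \<inter> {..<a + b} = (K \<inter> {..<a}) \<union> (\<lambda>j. j + a) ` ({j. j + a \<in> K} \<inter> {..<b})"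
  proof (rule set_eqI)
    fix x show "x \<in> K \<inter> {..<a + b} \<longleftrightarrow> x \<in> (K \<inter> {..<a}) \<union> (\<lambda>j. j + a) ` ({j. j + a \<in> K} \<inter> {..<b})"
      by (cases "x < a") (auto intro: image_eqI[of _ _ "x - a"])
  qed
  moreover have "card ((\<lambda>j. j + a) ` ({j. j + a \<in> K} \<inter> {..<b})) = card ({j. j + a \<in> K} \<inter> {..<b})"
    by (rule card_image) (simp add: inj_on_def)
  moreover have "(K \<inter> {..<a}) \<inter> (\<lambda>j. j + a) ` ({j. j + a \<in> K} \<inter> {..<b}) = {}" by auto
  ultimately show ?thesis
    unfolding initial_count_def by (simp add: card_Un_disjoint)
qed

lemma pos_density_natI:
  assumes "(\<lambda>n. real (initial_count K n) / real n) \<longlonglongrightarrow> d" "d \<noteq> 0"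
  shows "pos_density_nat K"
proof -
  have "card (K \<inter> {0..n}) = initial_count K (Suc n)" for n
    unfolding initial_count_def by (simp add: atLeast0AtMost lessThan_Suc_atMost)
  then have "(\<lambda>n. real (card (K \<inter> {0..n})) / real (n + 1)) = (\<lambda>n. real (initial_count K (Suc n)) / real (Suc n))"
    by simp
  then show ?thesis unfolding pos_density_nat_def using LIMSEQ_Suc[OF assms(1)] assms(2) by auto
qed

definition prefix_extendable :: "nat set set \<Rightarrow> (nat \<Rightarrow> nat set \<Rightarrow> bool) \<Rightarrow> nat \<Rightarrow> nat set \<Rightarrow> bool"
  where "prefix_extendable P G m F \<longleftrightarrow> (\<forall>L. \<exists>K\<in>P. K \<inter> {..<m} = F \<and> (\<forall>a\<le>L. G a K))"

lemma prefix_extendableD: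
  "prefix_extendable P G m F \<Longrightarrow> \<exists>K\<in>P. K \<inter> {..<m} = F \<and> (\<forall>a\<le>L. G a K)"
  unfolding prefix_extendable_def by blast

lemma prefix_extendable_Suc:
  assumes ext: "prefix_extendable P G m F"
  shows "\<exists>F'. prefix_extendable P G (Suc m) F' \<and> F' \<inter> {..<m} = F"
proof -
  have "prefix_extendable P G (Suc m) F \<or> prefix_extendable P G (Suc m) (insert m F)"
  proof (rule ccontr)
    assume "\<not> (prefix_extendable P G (Suc m) F \<or> prefix_extendable P G (Suc m) (insert m F))"
    then have "\<not> prefix_extendable P G (Suc m) F" "\<not> prefix_extendable P G (Suc m) (insert m F)"
      by auto
    then obtain L1 L2 where
      L1: "\<not> (\<exists>K\<in>P. K \<inter> {..<Suc m} = F \<and> (\<forall>a\<le>L1. G a K))" and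
      L2: "\<not> (\<exists>K\<in>P. K \<inter> {..<Suc m} = insert m F \<and> (\<forall>a\<le>L2. G a K))"
      unfolding prefix_extendable_def not_all by (elim exE)
    obtain K where K: "K \<in> P" "K \<inter> {..<m} = F" "\<forall>a\<le>max L1 L2. G a K"
      using prefix_extendableD[OF ext] by blast
    show False
    proof (cases "m \<in> K")
      case True
      then have "K \<inter> {..<Suc m} = insert m F" using K(2) by (auto simp: lessThan_Suc)
      moreover have "\<forall>a\<le>L2. G a K" using K(3) by simp
      ultimately show False using L2 K(1) by blast
    next
      case False
      then have "K \<inter> {..<Suc m} = F" using K(2) by (auto simp: lessThan_Suc)
      moreover have "\<forall>a\<le>L1. G a K" using K(3) by simp
      ultimately show False using L1 K(1) by blast
    qed
  qed
  moreover have "F \<subseteq> {..<m}" using prefix_extendableD[OF ext, of 0] by blast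
  then have "F \<inter> {..<m} = F" "insert m F \<inter> {..<m} = F" by auto
  ultimately show ?thesis by blast
qed

lemma coherent_prefixes_limit:
  assumes bounded: "\<And>m. f m \<subseteq> {..<m}" and coherent: "\<And>m. f (Suc m) \<inter> {..<m} = f m"
  shows "{j. j \<in> f (Suc j)} \<inter> {..<m} = f m"
proof (induction m)
  case 0
  then show ?case using bounded[of 0] by simp
next
  case (Suc m)
  have "{j. j \<in> f (Suc j)} \<inter> {..<Suc m} = ({j. j \<in> f (Suc j)} \<inter> {..<m}) \<union> (f (Suc m) \<inter> {m})"
    by (auto simp: lessThan_Suc)
  also have "\<dots> = (f (Suc m) \<inter> {..<m}) \<union> (f (Suc m) \<inter> {m})" by (simp only: Suc.IH coherent)
  also have "\<dots> = f (Suc m)" using bounded[of "Suc m"] by (auto simp: lessThan_Suc)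
  finally show ?case .
qed

lemma finite_character_compactness:
  fixes P :: "nat set set" and G :: "nat \<Rightarrow> nat set \<Rightarrow> bool"
  assumes hereditary: "\<And>K K'. K \<in> P \<Longrightarrow> K' \<subseteq> K \<Longrightarrow> K' \<in> P"
    and finite_character: "\<And>K. (\<And>F. finite F \<Longrightarrow> F \<subseteq> K \<Longrightarrow> F \<in> P) \<Longrightarrow> K \<in> P"
    and prefix: "\<And>a K K'. K \<inter> {..<a} = K' \<inter> {..<a} \<Longrightarrow> G a K \<Longrightarrow> G a K'"
    and approx: "\<And>L. \<exists>K\<in>P. \<forall>a\<le>L. G a K"
  shows "\<exists>K\<in>P. \<forall>a. G a K"
proof -
  have "\<exists>f. \<forall>m. prefix_extendable P G m (f m) \<and> f (Suc m) \<inter> {..<m} = f m"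
  proof (rule dependent_nat_choice[of "prefix_extendable P G" "\<lambda>m F F'. F' \<inter> {..<m} = F"])
    show "\<exists>F. prefix_extendable P G 0 F" using approx unfolding prefix_extendable_def by auto
  qed (rule prefix_extendable_Suc)
  then obtain f where ext: "\<And>m. prefix_extendable P G m (f m)"
    and coherent: "\<And>m. f (Suc m) \<inter> {..<m} = f m"
    by blast
  have "f m \<subseteq> {..<m}" for m using prefix_extendableD[OF ext[of m], of 0] by blast
  then have K_prefix: "{j. j \<in> f (Suc j)} \<inter> {..<m} = f m" for m
    using coherent by (rule coherent_prefixes_limit)
  have "{j. j \<in> f (Suc j)} \<in> P"
  proof (rule finite_character)
    fix F assume F: "finite F" "F \<subseteq> {j. j \<in> f (Suc j)}"
    obtain m where "F \<subseteq> {..<m}" using F(1) finite_nat_iff_bounded by blast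
    then have "F \<subseteq> f m" using F(2) K_prefix[of m] by blast
    moreover obtain K where "K \<in> P" "K \<inter> {..<m} = f m"
      using prefix_extendableD[OF ext[of m], of 0] by blast
    ultimately show "F \<in> P" using hereditary by blast
  qed
  moreover have "G a {j. j \<in> f (Suc j)}" for a
  proof -
    obtain K where K: "K \<in> P" "K \<inter> {..<a} = f a" "G a K"
      using prefix_extendableD[OF ext[of a], of a] by blast
    show ?thesis by (rule prefix[OF _ K(3)]) (simp add: K(2) K_prefix)
  qed
  ultimately show ?thesis by blast
qed

lemma sqrt_of_nat_le: "sqrt (real m) \<le> real m"
proof (rule real_le_lsqrt)
  show "real m \<le> (real m)\<^sup>2" by (cases m) (simp_all add: power2_eq_square)
qed simp

locale dense_family =
  fixes P :: "nat set set" and c :: real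
  assumes hereditary: "\<And>K K'. K \<in> P \<Longrightarrow> K' \<subseteq> K \<Longrightarrow> K' \<in> P"
    and shift_closed: "\<And>K t. K \<in> P \<Longrightarrow> {j. j + t \<in> K} \<in> P"
    and finite_character: "\<And>K. (\<And>F. finite F \<Longrightarrow> F \<subseteq> K \<Longrightarrow> F \<in> P) \<Longrightarrow> K \<in> P"
    and c_pos: "c > 0"
    and linear_count: "\<And>n. \<exists>K\<in>P. c * real n \<le> real (initial_count K n)"
begin

definition max_count :: "nat \<Rightarrow> nat" where
  "max_count n = Max ((\<lambda>K. initial_count K n) ` P)"

lemma finite_counts: "finite ((\<lambda>K. initial_count K n) ` P)"
  by (rule finite_subset[of _ "{..n}"]) (auto simp: initial_count_le)

lemma initial_count_le_max_count: "K \<in> P \<Longrightarrow> initial_count K n \<le> max_count n"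
  unfolding max_count_def using finite_counts by simp

lemma max_count_attained: "\<exists>K\<in>P. initial_count K n = max_count n"
proof -
  have "P \<noteq> {}" using linear_count by blast
  then have "max_count n \<in> (\<lambda>K. initial_count K n) ` P"
    unfolding max_count_def using finite_counts by (intro Max_in) auto
  then show ?thesis by auto
qed

lemma max_count_le: "max_count n \<le> n"
  using max_count_attained initial_count_le by metis

lemma max_count_add: "max_count (a + b) \<le> max_count a + max_count b"
proof -
  obtain K where K: "K \<in> P" "initial_count K (a + b) = max_count (a + b)"
    using max_count_attained by blast
  have "initial_count K a \<le> max_count a" "initial_count {j. j + a \<in> K} b \<le> max_count b"
    using K(1) shift_closed initial_count_le_max_count by blast+
  then show ?thesis using initial_count_add[of K a b] K(2) by linarith
qed

lemma max_count_mult_add: "max_count (q * m + r) \<le> q * max_count m + max_count r"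
proof (induction q)
  case (Suc q)
  have "max_count (Suc q * m + r) \<le> max_count m + max_count (q * m + r)"
    using max_count_add[of m "q * m + r"] by (simp add: add.assoc)
  then show ?case using Suc by simp
qed simp

lemma max_count_ratio_le:
  assumes "m > 0" "n > 0"
  shows "real (max_count n) / real n \<le> real (max_count m) / real m + real m / real n"
proof -
  define q where "q = n div m"
  have n: "n = q * m + n mod m" unfolding q_def by simp
  have "max_count n \<le> q * max_count m + n mod m"
    using max_count_mult_add[of q m "n mod m"] max_count_le[of "n mod m"] n by simp
  then have "real (max_count n) \<le> real q * real (max_count m) + real (n mod m)"
    using of_nat_mono[where 'a = real] by fastforce
  moreover have "real (n mod m) \<le> real m" using assms(1) by simp
  moreover have "real q * real (max_count m) \<le> real n * real (max_count m) / real m"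
  proof -
    have "real q * real m \<le> real n" using n by (metis le_add1 of_nat_le_iff of_nat_mult)
    then have "real q * real m * real (max_count m) \<le> real n * real (max_count m)"
      by (rule mult_right_mono) simp
    then show ?thesis using assms(1) by (simp add: field_simps)
  qed
  ultimately have "real (max_count n) \<le> real n * real (max_count m) / real m + real m"
    by linarith
  then have "real (max_count n) / real n \<le> (real n * real (max_count m) / real m + real m) / real n"
    by (rule divide_right_mono) simp
  also have "\<dots> = real (max_count m) / real m + real m / real n"
    using assms by (simp add: field_simps)
  finally show ?thesis .
qed

definition max_density :: real where
  "max_density = Inf ((\<lambda>n. real (max_count n) / real n) ` {1..})"

lemma bdd_below_count_ratios: "bdd_below ((\<lambda>n. real (max_count n) / real n) ` {1..})"
  by (rule bdd_belowI[of _ 0]) auto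

lemma max_density_le: "n \<ge> 1 \<Longrightarrow> max_density \<le> real (max_count n) / real n"
  unfolding max_density_def by (rule cInf_lower[OF _ bdd_below_count_ratios]) auto

lemma max_density_times_le: "max_density * real n \<le> real (max_count n)"
proof (cases "n = 0")
  case False
  then show ?thesis using max_density_le[of n] by (simp add: field_simps)
qed simp

lemma max_density_pos: "max_density > 0"
proof -
  have "c \<le> max_density"
    unfolding max_density_def
  proof (rule cInf_greatest)
    fix x assume "x \<in> (\<lambda>n. real (max_count n) / real n) ` {1..}"
    then obtain n where n: "n \<ge> 1" "x = real (max_count n) / real n" by auto
    obtain K where K: "K \<in> P" "c * real n \<le> real (initial_count K n)" using linear_count by blast
    have "c * real n \<le> real (max_count n)" using K initial_count_le_max_count[OF K(1), of n] by linarith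
    then have "c * real n \<le> x * real n" using n by simp
    then show "c \<le> x" by (rule mult_right_le_imp_le) (use n in simp)
  qed auto
  then show ?thesis using c_pos by linarith
qed

lemma max_count_ratio_tendsto: "(\<lambda>n. real (max_count n) / real n) \<longlonglongrightarrow> max_density"
proof (rule order_tendstoI)
  fix a assume "a < max_density"
  show "\<forall>\<^sub>F n in sequentially. a < real (max_count n) / real n"
    using eventually_ge_at_top[of 1]
  proof eventually_elim
    case (elim n)
    then show ?case using max_density_le[of n] \<open>a < max_density\<close> by linarith
  qed
next
  fix a assume "max_density < a"
  then obtain m where m: "m \<ge> 1" "real (max_count m) / real m < a"
    unfolding max_density_def by (subst (asm) cInf_less_iff[OF _ bdd_below_count_ratios]) auto
  have "(\<lambda>n. real (max_count m) / real m + real m / real n) \<longlonglongrightarrow> real (max_count m) / real m + 0"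
    by (intro tendsto_add tendsto_const lim_const_over_n)
  then have "\<forall>\<^sub>F n in sequentially. real (max_count m) / real m + real m / real n < a"
    using m(2) by (intro order_tendstoD(2)) auto
  then show "\<forall>\<^sub>F n in sequentially. real (max_count n) / real n < a"
    using eventually_ge_at_top[of 1]
  proof eventually_elim
    case (elim n)
    then show ?case using max_count_ratio_le[of m n] m(1) by linarith
  qed
qed

(* Rising sun: b minimises h on [0, n]. As h n - h b >= sqrt n = 2 L while h grows by at most
   2 (n - b) on [b, n], the segment after b has length at least L, and on it h stays >= h b. *)
lemma rising_sun: "\<exists>K\<in>P. \<forall>a\<le>L. max_density * real a - sqrt (real a) \<le> real (initial_count K a)"
proof -
  define n where "n = 4 * L * L"
  obtain J where J: "J \<in> P" "initial_count J n = max_count n" using max_count_attained by blast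
  define h where "h x = real (initial_count J x) - max_density * real x + sqrt (real x)" for x
  obtain b where b: "b \<le> n" "\<And>x. x \<le> n \<Longrightarrow> h b \<le> h x"
    using Min_in[of "h ` {..n}"] Min_le[of "h ` {..n}"] by fastforce
  have "L \<le> n - b"
  proof (rule ccontr)
    assume "\<not> L \<le> n - b"
    have "h n \<ge> sqrt (real n)" using J max_density_times_le[of n] unfolding h_def by simp
    moreover have "sqrt (real n) = 2 * real L" unfolding n_def by (simp add: real_sqrt_mult)
    moreover have "h b \<le> 0" using b(2)[of 0] unfolding h_def by (simp add: initial_count_def)
    moreover have "h n - h b \<le> real (n - b) + sqrt (real (n - b))"
    proof -
      have "initial_count J n = initial_count J b + initial_count {j. j + b \<in> J} (n - b)"
        using initial_count_add[of J b "n - b"] b(1) by simp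
      then have "real (initial_count J n) - real (initial_count J b) \<le> real (n - b)"
        using initial_count_le[of _ "n - b"] by simp
      moreover have "sqrt (real n) \<le> sqrt (real b) + sqrt (real (n - b))"
        using sqrt_add_le_add_sqrt[of "real b" "real (n - b)"] b(1) by simp
      moreover have "max_density * real b \<le> max_density * real n"
        using max_density_pos b(1) by simp
      ultimately show ?thesis unfolding h_def by simp
    qed
    moreover have "sqrt (real (n - b)) \<le> real (n - b)" by (rule sqrt_of_nat_le)
    ultimately show False using \<open>\<not> L \<le> n - b\<close> by linarith
  qed
  show ?thesis
  proof (intro bexI allI impI)
    show "{j. j + b \<in> J} \<in> P" using shift_closed J(1) by blast
    fix a assume "a \<le> L"
    have "h b \<le> h (b + a)" using b \<open>L \<le> n - b\<close> \<open>a \<le> L\<close> by (intro b(2)) simp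
    moreover have "sqrt (real (b + a)) \<le> sqrt (real b) + sqrt (real a)"
      using sqrt_add_le_add_sqrt[of "real b" "real a"] by simp
    ultimately show "max_density * real a - sqrt (real a) \<le> real (initial_count {j. j + b \<in> J} a)"
      using initial_count_add[of J b a] unfolding h_def by (simp add: algebra_simps)
  qed
qed

lemma exists_uniformly_dense:
  "\<exists>K\<in>P. \<forall>a. max_density * real a - sqrt (real a) \<le> real (initial_count K a)"
proof (rule finite_character_compactness)
  show "K' \<in> P" if "K \<in> P" "K' \<subseteq> K" for K K' using hereditary that .
  show "K \<in> P" if "\<And>F. finite F \<Longrightarrow> F \<subseteq> K \<Longrightarrow> F \<in> P" for K
    using finite_character that by blast
  show "max_density * real a - sqrt (real a) \<le> real (initial_count K' a)"
    if "K \<inter> {..<a} = K' \<inter> {..<a}" "max_density * real a - sqrt (real a) \<le> real (initial_count K a)"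
    for a K K'
    using that by (simp add: initial_count_def)
qed (rule rising_sun)

lemma exists_pos_density: "\<exists>K\<in>P. pos_density_nat K"
proof -
  obtain K where K: "K \<in> P" "\<And>a. max_density * real a - sqrt (real a) \<le> real (initial_count K a)"
    using exists_uniformly_dense by blast
  have "(\<lambda>n. max_density - sqrt (real n) / real n) \<longlonglongrightarrow> max_density - 0"
    by (intro tendsto_diff tendsto_const) real_asymp
  then have lower: "(\<lambda>n. max_density - sqrt (real n) / real n) \<longlonglongrightarrow> max_density" by simp
  have "\<forall>\<^sub>F n in sequentially. max_density - sqrt (real n) / real n \<le> real (initial_count K n) / real n"
    using eventually_gt_at_top[of 0]
  proof eventually_elim
    case (elim n)
    then have "max_density - sqrt (real n) / real n = (max_density * real n - sqrt (real n)) / real n"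
      by (simp add: field_simps)
    also have "\<dots> \<le> real (initial_count K n) / real n" by (rule divide_right_mono[OF K(2)]) simp
    finally show ?case .
  qed
  moreover have "\<forall>\<^sub>F n in sequentially. real (initial_count K n) / real n \<le> real (max_count n) / real n"
    using initial_count_le_max_count[OF K(1)] by (intro always_eventually allI divide_right_mono) auto
  ultimately have "(\<lambda>n. real (initial_count K n) / real n) \<longlonglongrightarrow> max_density"
    using lower max_count_ratio_tendsto by (rule tendsto_sandwich)
  then have "pos_density_nat K" by (rule pos_density_natI) (use max_density_pos in simp)
  then show ?thesis using K(1) by blast
qed

end

section \<open>Averaging over translates\<close>

lemma exists_pair_many_common:
  fixes W :: "'w set" and P1 P2 :: "nat \<Rightarrow> 'w \<Rightarrow> bool"
  assumes W: "finite W" "W \<noteq> {}" and b: "b1 \<ge> 0" "b2 \<ge> 0"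
    and many1: "\<And>i. i < n \<Longrightarrow> b1 * real (card W) \<le> real (card {u\<in>W. P1 i u})"
    and many2: "\<And>i. i < n \<Longrightarrow> b2 * real (card W) \<le> real (card {t\<in>W. P2 i t})"
  shows "\<exists>u\<in>W. \<exists>t\<in>W. b1 * b2 * real n \<le> real (card {i\<in>{..<n}. P1 i u \<and> P2 i t})"
proof (rule ccontr)
  assume "\<not> ?thesis"
  then have few: "real (card {i\<in>{..<n}. P1 i u \<and> P2 i t}) < b1 * b2 * real n"
    if "u \<in> W" "t \<in> W" for u t
    using that not_le by blast
  define N where "N = real (card W)"
  have card_eq_sum: "real (card {x\<in>W. Q x}) = (\<Sum>x\<in>W. of_bool (Q x))" for Q
    using W(1) by (simp add: Int_def)
  have "N * N * (b1 * b2 * real n) = (\<Sum>i<n. (b1 * N) * (b2 * N))" by (simp add: algebra_simps)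
  also have "\<dots> \<le> (\<Sum>i<n. real (card {u\<in>W. P1 i u}) * real (card {t\<in>W. P2 i t}))"
    using many1 many2 b by (intro sum_mono mult_mono) (auto simp: N_def)
  also have "\<dots> = (\<Sum>i<n. \<Sum>u\<in>W. \<Sum>t\<in>W. of_bool (P1 i u \<and> P2 i t))"
    by (simp add: card_eq_sum sum_product of_bool_conj)
  also have "\<dots> = (\<Sum>u\<in>W. \<Sum>t\<in>W. \<Sum>i<n. of_bool (P1 i u \<and> P2 i t))"
    by (subst sum.swap) (rule sum.cong[OF refl], rule sum.swap)
  also have "\<dots> = (\<Sum>u\<in>W. \<Sum>t\<in>W. real (card {i\<in>{..<n}. P1 i u \<and> P2 i t}))"
    by (simp add: Int_def)
  also have "\<dots> < (\<Sum>u\<in>W. \<Sum>t\<in>W. b1 * b2 * real n)"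
    using W few by (intro sum_strict_mono) auto
  also have "\<dots> = N * N * (b1 * b2 * real n)" by (simp add: N_def)
  finally show False by simp
qed

lemma card_inter_le_translate:
  fixes a :: "'i::cancel_semigroup_add"
  assumes "finite W"
  shows "card (J \<inter> W) \<le> card (W - (+) a ` W) + card {u \<in> W. a + u \<in> J}"
proof -
  have "J \<inter> W \<subseteq> (W - (+) a ` W) \<union> (+) a ` {u \<in> W. a + u \<in> J}" by auto
  then have "card (J \<inter> W) \<le> card ((W - (+) a ` W) \<union> (+) a ` {u \<in> W. a + u \<in> J})"
    by (rule card_mono[rotated]) (use assms in simp)
  also have "\<dots> \<le> card (W - (+) a ` W) + card ((+) a ` {u \<in> W. a + u \<in> J})"
    by (rule card_Un_le)
  also have "\<dots> \<le> card (W - (+) a ` W) + card {u \<in> W. a + u \<in> J}"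
    using card_image_le[of "{u \<in> W. a + u \<in> J}" "(+) a"] assms by simp
  finally show ?thesis .
qed

lemma card_inter_atMost_le_translate:
  "card (J \<inter> {..M}) \<le> i + card {u \<in> {..M}. i + u \<in> (J :: nat set)}"
proof -
  have "{..M} - (+) i ` {..M} \<subseteq> {..<i}"
  proof
    fix x assume x: "x \<in> {..M} - (+) i ` {..M}"
    show "x \<in> {..<i}"
    proof (rule ccontr)
      assume "x \<notin> {..<i}"
      then have "x = i + (x - i)" "x - i \<in> {..M}" using x by auto
      then show False using x by blast
    qed
  qed
  then have "card ({..M} - (+) i ` {..M}) \<le> i" using card_mono[of "{..<i}"] by fastforce
  then show ?thesis using card_inter_le_translate[of "{..M}" J i] by simp
qed

lemma card_inter_symmetric_le_translate:
  "card (J \<inter> {- int M..int M}) \<le> i + card {u \<in> {- int M..int M}. int i + u \<in> J}"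
proof -
  have "{- int M..int M} - (+) (int i) ` {- int M..int M} \<subseteq> {- int M..<- int M + int i}"
  proof
    fix x assume x: "x \<in> {- int M..int M} - (+) (int i) ` {- int M..int M}"
    show "x \<in> {- int M..<- int M + int i}"
    proof (rule ccontr)
      assume "x \<notin> {- int M..<- int M + int i}"
      then have "x = int i + (x - int i)" "x - int i \<in> {- int M..int M}" using x by auto
      then show False using x by blast
    qed
  qed
  then have "card ({- int M..int M} - (+) (int i) ` {- int M..int M}) \<le> i"
    using card_mono[of "{- int M..<- int M + int i}"] by fastforce
  then show ?thesis using card_inter_le_translate[of "{- int M..int M}" J "int i"] by simp
qed

lemma eventually_translates_dense:
  fixes e :: "nat \<Rightarrow> 'i::plus" and W :: "nat \<Rightarrow> 'i set"
  assumes lim: "(\<lambda>M. real (card (J \<inter> W M)) / real (card (W M))) \<longlonglongrightarrow> d" and "d > 0"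
    and size: "\<And>M. M < card (W M)"
    and translate: "\<And>M i. card (J \<inter> W M) \<le> i + card {u \<in> W M. e i + u \<in> J}"
  shows "\<forall>\<^sub>F M in sequentially. \<forall>i<n. d / 4 * real (card (W M)) \<le> real (card {u \<in> W M. e i + u \<in> J})"
proof -
  have "\<forall>\<^sub>F M in sequentially. d / 2 < real (card (J \<inter> W M)) / real (card (W M))"
    by (rule order_tendstoD(1)[OF lim]) (use \<open>d > 0\<close> in simp)
  moreover have "\<forall>\<^sub>F M in sequentially. 4 * real n / d \<le> real M"
    by (rule eventually_sequentiallyI[of "nat \<lceil>4 * real n / d\<rceil>"]) linarith
  ultimately show ?thesis
  proof eventually_elim
    case (elim M)
    have "real M < real (card (W M))" using size[of M] by simp
    then have dense: "d / 2 * real (card (W M)) < real (card (J \<inter> W M))"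
      using elim(1) by (simp add: field_simps)
    have "real n \<le> d / 4 * real M" using elim(2) \<open>d > 0\<close> by (simp add: field_simps)
    also have "\<dots> \<le> d / 4 * real (card (W M))" using size[of M] \<open>d > 0\<close> by simp
    finally have "real n \<le> d / 4 * real (card (W M))" .
    have translate_real: "real (card (J \<inter> W M)) \<le> real i + real (card {u \<in> W M. e i + u \<in> J})" for i
      using translate[of M i] by linarith
    show ?case
    proof (intro allI impI)
      fix i assume "i < n"
      then have "real i < real n" by simp
      then show "d / 4 * real (card (W M)) \<le> real (card {u \<in> W M. e i + u \<in> J})"
        using dense \<open>real n \<le> d / 4 * real (card (W M))\<close> translate_real[of i] by linarith
    qed
  qed
qed

lemma pos_density_nat_translates:
  assumes "pos_density_nat J"
  obtains b where "b > 0"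
    "\<And>n. \<forall>\<^sub>F M in sequentially. \<forall>i<n. b * real (card {..M}) \<le> real (card {u \<in> {..M}. i + u \<in> J})"
proof -
  obtain d where d: "d \<noteq> 0" "(\<lambda>M. real (card (J \<inter> {0..M})) / real (M + 1)) \<longlonglongrightarrow> d"
    using assms unfolding pos_density_nat_def by blast
  have "d \<ge> 0" by (rule LIMSEQ_le_const[OF d(2)]) simp
  with d have lim: "(\<lambda>M. real (card (J \<inter> {..M})) / real (card {..M})) \<longlonglongrightarrow> d" and "d > 0"
    by (simp_all add: atLeast0AtMost)
  show thesis
  proof (rule that)
    show "d / 4 > 0" using \<open>d > 0\<close> by simp
    show "\<forall>\<^sub>F M in sequentially. \<forall>i<n. d / 4 * real (card {..M}) \<le> real (card {u \<in> {..M}. i + u \<in> J})"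
      for n
    proof (rule eventually_translates_dense[where e = "\<lambda>i. i", OF lim \<open>d > 0\<close>])
      show "M < card {..M}" for M by simp
      show "card (J \<inter> {..M}) \<le> i + card {u \<in> {..M}. i + u \<in> J}" for M i
        by (rule card_inter_atMost_le_translate)
    qed
  qed
qed

lemma pos_density_int_translates:
  assumes "pos_density_int J"
  obtains b where "b > 0"
    "\<And>n. \<forall>\<^sub>F M in sequentially. \<forall>i<n.
       b * real (card {- int M..int M}) \<le> real (card {u \<in> {- int M..int M}. int i + u \<in> J})"
proof -
  obtain d where d: "d \<noteq> 0"
    "(\<lambda>M. real (card (J \<inter> {- int M..int M})) / real (2 * M + 1)) \<longlonglongrightarrow> d"
    using assms unfolding pos_density_int_def by blast
  have "d \<ge> 0" by (rule LIMSEQ_le_const[OF d(2)]) simp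
  have "card {- int M..int M} = 2 * M + 1" for M by simp
  with d \<open>d \<ge> 0\<close> have lim: "(\<lambda>M. real (card (J \<inter> {- int M..int M})) / real (card {- int M..int M}))
      \<longlonglongrightarrow> d" and "d > 0"
    by simp_all
  show thesis
  proof (rule that)
    show "d / 4 > 0" using \<open>d > 0\<close> by simp
    show "\<forall>\<^sub>F M in sequentially. \<forall>i<n.
      d / 4 * real (card {- int M..int M}) \<le> real (card {u \<in> {- int M..int M}. int i + u \<in> J})" for n
    proof (rule eventually_translates_dense[where e = int, OF lim \<open>d > 0\<close>])
      show "M < card {- int M..int M}" for M by simp
      show "card (J \<inter> {- int M..int M}) \<le> i + card {u \<in> {- int M..int M}. int i + u \<in> J}" for M i
        by (rule card_inter_symmetric_le_translate)
    qed
  qed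
qed

lemma pos_density_int_image:
  assumes "pos_density_nat K"
  shows "pos_density_int (int ` K)"
proof -
  obtain d where d: "d \<noteq> 0" "(\<lambda>n. real (card (K \<inter> {0..n})) / real (n + 1)) \<longlonglongrightarrow> d"
    using assms unfolding pos_density_nat_def by blast
  have "card (int ` K \<inter> {- int n..int n}) = card (K \<inter> {0..n})" for n
  proof -
    have "int ` K \<inter> {- int n..int n} = int ` (K \<inter> {0..n})" by auto
    then show ?thesis by (simp add: card_image)
  qed
  then have "real (card (int ` K \<inter> {- int n..int n})) / real (2 * n + 1) =
      real (card (K \<inter> {0..n})) / real (n + 1) * (real (n + 1) / real (2 * n + 1))" for n
    by simp
  moreover have "(\<lambda>n. real (card (K \<inter> {0..n})) / real (n + 1) * (real (n + 1) / real (2 * n + 1)))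
      \<longlonglongrightarrow> d * (1 / 2)"
    by (rule tendsto_mult[OF d(2)]) real_asymp
  ultimately show ?thesis
    unfolding pos_density_int_def using d(1) by (intro exI[of _ "d * (1 / 2)"]) simp
qed

section \<open>Products\<close>

(* e is the inclusion of N into the acting monoid: the identity for N, int for Z. *)
lemma common_indep_linear_count:
  fixes e :: "nat \<Rightarrow> 'i::cancel_semigroup_add" and W :: "nat \<Rightarrow> 'i set"
  assumes size: "\<And>M. M < card (W M)" and b: "b1 \<ge> 0" "b2 \<ge> 0"
    and dense1: "\<forall>\<^sub>F M in sequentially. \<forall>i<n. b1 * real (card (W M)) \<le> real (card {u \<in> W M. e i + u \<in> J1})"
    and dense2: "\<forall>\<^sub>F M in sequentially. \<forall>i<n. b2 * real (card (W M)) \<le> real (card {u \<in> W M. e i + u \<in> J2})"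
    and ind1: "indep_wrt act1 Us J1" and ind2: "indep_wrt act2 Vs J2" and "inj e"
    and hom1: "\<And>i u. act1 (e i + u) = act1 (e i) \<circ> act1 u"
    and hom2: "\<And>i u. act2 (e i + u) = act2 (e i) \<circ> act2 u"
  shows "\<exists>K. indep_wrt (act1 \<circ> e) Us K \<and> indep_wrt (act2 \<circ> e) Vs K \<and>
    b1 * b2 * real n \<le> real (initial_count K n)"
proof -
  obtain N where N: "\<And>M. M \<ge> N \<Longrightarrow>
      (\<forall>i<n. b1 * real (card (W M)) \<le> real (card {u \<in> W M. e i + u \<in> J1})) \<and>
      (\<forall>i<n. b2 * real (card (W M)) \<le> real (card {u \<in> W M. e i + u \<in> J2}))"
    using eventually_conj[OF dense1 dense2] unfolding eventually_sequentially by blast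
  have "card (W N) > 0" using size[of N] by simp
  then have W: "finite (W N)" "W N \<noteq> {}" by (simp_all add: card_gt_0_iff)
  obtain u t where ut: "b1 * b2 * real n \<le> real (card {i \<in> {..<n}. e i + u \<in> J1 \<and> e i + t \<in> J2})"
    using exists_pair_many_common[OF W b, of n "\<lambda>i u. e i + u \<in> J1" "\<lambda>i t. e i + t \<in> J2"] N[of N]
    by auto
  define K where "K = {i. e i + u \<in> J1 \<and> e i + t \<in> J2}"
  have "indep_wrt (act1 \<circ> e) Us K"
    by (rule indep_wrt_subset[OF indep_wrt_shift[where u = u, OF ind1 \<open>inj e\<close> hom1]])
      (auto simp: K_def)
  moreover have "indep_wrt (act2 \<circ> e) Vs K"
    by (rule indep_wrt_subset[OF indep_wrt_shift[where u = t, OF ind2 \<open>inj e\<close> hom2]])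
      (auto simp: K_def)
  moreover have "initial_count K n = card {i \<in> {..<n}. e i + u \<in> J1 \<and> e i + t \<in> J2}"
    unfolding initial_count_def K_def by (rule arg_cong[where f = card]) auto
  ultimately show ?thesis using ut by auto
qed

lemma common_indep_pos_density:
  fixes act1 :: "nat \<Rightarrow> 'a \<Rightarrow> 'a" and act2 :: "nat \<Rightarrow> 'b \<Rightarrow> 'b"
  assumes "c > 0"
    and linear: "\<And>n. \<exists>K. indep_wrt act1 Us K \<and> indep_wrt act2 Vs K \<and> c * real n \<le> real (initial_count K n)"
    and hom1: "\<And>i j. act1 (i + j) = act1 i \<circ> act1 j"
    and hom2: "\<And>i j. act2 (i + j) = act2 i \<circ> act2 j"
  shows "\<exists>K. indep_wrt act1 Us K \<and> indep_wrt act2 Vs K \<and> pos_density_nat K"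
proof -
  define P where "P = {K. indep_wrt act1 Us K \<and> indep_wrt act2 Vs K}"
  interpret dense_family P c
  proof
    show "K' \<in> P" if "K \<in> P" "K' \<subseteq> K" for K K'
      using that unfolding P_def by (auto intro: indep_wrt_subset)
    show "{j. j + t \<in> K} \<in> P" if "K \<in> P" for K t
      using that indep_wrt_shift_nat[of act1 Us K t] indep_wrt_shift_nat[of act2 Vs K t] hom1 hom2
      unfolding P_def by blast
    show "K \<in> P" if fin: "\<And>F. finite F \<Longrightarrow> F \<subseteq> K \<Longrightarrow> F \<in> P" for K
    proof -
      have "indep_wrt act1 Us K" by (rule indep_wrt_finite_character) (use fin in \<open>auto simp: P_def\<close>)
      moreover have "indep_wrt act2 Vs K" by (rule indep_wrt_finite_character) (use fin in \<open>auto simp: P_def\<close>)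
      ultimately show ?thesis by (simp add: P_def)
    qed
    show "c > 0" by fact
    show "\<exists>K\<in>P. c * real n \<le> real (initial_count K n)" for n
      using linear[of n] unfolding P_def by auto
  qed
  show ?thesis using exists_pos_density unfolding P_def by blast
qed

lemma pos_density_indep_product_nat:
  fixes T :: "'a \<Rightarrow> 'a" and S :: "'b \<Rightarrow> 'b"
  assumes ind1: "indep_wrt (\<lambda>n. T ^^ n) Us J1" and dens1: "pos_density_nat J1"
    and ind2: "indep_wrt (\<lambda>n. S ^^ n) Vs J2" and dens2: "pos_density_nat J2"
    and len: "length Us = length Vs"
  shows "\<exists>K. indep_wrt (\<lambda>n. map_prod T S ^^ n) (map2 (\<times>) Us Vs) K \<and> pos_density_nat K"
proof -
  obtain b1 where b1: "b1 > 0" "\<And>n. \<forall>\<^sub>F M in sequentially. \<forall>i<n.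
      b1 * real (card {..M}) \<le> real (card {u \<in> {..M}. i + u \<in> J1})"
    using pos_density_nat_translates[OF dens1] by blast
  obtain b2 where b2: "b2 > 0" "\<And>n. \<forall>\<^sub>F M in sequentially. \<forall>i<n.
      b2 * real (card {..M}) \<le> real (card {u \<in> {..M}. i + u \<in> J2})"
    using pos_density_nat_translates[OF dens2] by blast
  have linear: "\<exists>K. indep_wrt (\<lambda>n. T ^^ n) Us K \<and> indep_wrt (\<lambda>n. S ^^ n) Vs K \<and>
      b1 * b2 * real n \<le> real (initial_count K n)" for n
    using common_indep_linear_count[where W = "\<lambda>M. {..M}" and e = "\<lambda>i. i",
        OF _ _ _ b1(2) b2(2) ind1 ind2 inj_on_id2 funpow_add funpow_add] b1(1) b2(1)
    by (simp add: comp_def)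
  have "b1 * b2 > 0" using b1(1) b2(1) by simp
  then obtain K where K: "indep_wrt (\<lambda>n. T ^^ n) Us K" "indep_wrt (\<lambda>n. S ^^ n) Vs K" "pos_density_nat K"
    using common_indep_pos_density[OF _ linear funpow_add funpow_add] by blast
  have "indep_wrt (\<lambda>n. map_prod (T ^^ n) (S ^^ n)) (map2 (\<times>) Us Vs) K"
    by (rule indep_wrt_product[OF K(1,2) len])
  then show ?thesis using K(3) by (auto simp: funpow_map_prod)
qed

lemma pos_density_indep_product_int:
  fixes T :: "'a \<Rightarrow> 'a" and S :: "'b \<Rightarrow> 'b"
  assumes "bij T" "bij S"
    and ind1: "indep_wrt (int_act T) Us J1" and dens1: "pos_density_int J1"
    and ind2: "indep_wrt (int_act S) Vs J2" and dens2: "pos_density_int J2"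
    and len: "length Us = length Vs"
  shows "\<exists>K. indep_wrt (int_act (map_prod T S)) (map2 (\<times>) Us Vs) K \<and> pos_density_int K"
proof -
  obtain b1 where b1: "b1 > 0" "\<And>n. \<forall>\<^sub>F M in sequentially. \<forall>i<n.
      b1 * real (card {- int M..int M}) \<le> real (card {u \<in> {- int M..int M}. int i + u \<in> J1})"
    using pos_density_int_translates[OF dens1] by blast
  obtain b2 where b2: "b2 > 0" "\<And>n. \<forall>\<^sub>F M in sequentially. \<forall>i<n.
      b2 * real (card {- int M..int M}) \<le> real (card {u \<in> {- int M..int M}. int i + u \<in> J2})"
    using pos_density_int_translates[OF dens2] by blast
  have int_act_comp_int: "int_act R \<circ> int = (\<lambda>n. R ^^ n)" for R :: "'c \<Rightarrow> 'c"
    by (simp add: fun_eq_iff int_act_of_nat)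
  have linear: "\<exists>K. indep_wrt (\<lambda>n. T ^^ n) Us K \<and> indep_wrt (\<lambda>n. S ^^ n) Vs K \<and>
      b1 * b2 * real n \<le> real (initial_count K n)" for n
    using common_indep_linear_count[where W = "\<lambda>M. {- int M..int M}" and e = int,
        OF _ _ _ b1(2) b2(2) ind1 ind2 inj_of_nat int_act_add[OF \<open>bij T\<close>] int_act_add[OF \<open>bij S\<close>]]
      b1(1) b2(1)
    by (simp add: int_act_comp_int)
  have "b1 * b2 > 0" using b1(1) b2(1) by simp
  then obtain K where K: "indep_wrt (\<lambda>n. T ^^ n) Us K" "indep_wrt (\<lambda>n. S ^^ n) Vs K" "pos_density_nat K"
    using common_indep_pos_density[OF _ linear funpow_add funpow_add] by blast
  have "indep_wrt (\<lambda>n. map_prod (T ^^ n) (S ^^ n)) (map2 (\<times>) Us Vs) K"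
    by (rule indep_wrt_product[OF K(1,2) len])
  then have "indep_wrt (int_act (map_prod T S) \<circ> int) (map2 (\<times>) Us Vs) K"
    by (simp add: int_act_comp_int funpow_map_prod)
  then have "indep_wrt (int_act (map_prod T S)) (map2 (\<times>) Us Vs) (int ` K)"
    by (rule indep_wrt_image_of_comp[OF inj_on_of_nat])
  then show ?thesis using pos_density_int_image[OF K(3)] by blast
qed

lemma IE_nat_map_prod:
  fixes T :: "'a::topological_space \<Rightarrow> 'a" and S :: "'b::topological_space \<Rightarrow> 'b"
  shows "(\<lambda>zs. (map fst zs, map snd zs)) ` IE_nat k (map_prod T S) = IE_nat k T \<times> IE_nat k S"
  unfolding IE_nat_eq_IE_with
proof (rule IE_with_product)
  show "\<exists>J. indep_wrt (\<lambda>n. T ^^ n) Us J \<and> pos_density_nat J"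
    if "\<exists>J. indep_wrt (\<lambda>n. map_prod T S ^^ n) (map (\<lambda>U. U \<times> UNIV) Us) J \<and> pos_density_nat J" for Us
    using that indep_wrt_fst[of "\<lambda>n. T ^^ n" "\<lambda>n. S ^^ n" Us] by (auto simp: funpow_map_prod)
  show "\<exists>J. indep_wrt (\<lambda>n. S ^^ n) Vs J \<and> pos_density_nat J"
    if "\<exists>J. indep_wrt (\<lambda>n. map_prod T S ^^ n) (map (\<lambda>V. UNIV \<times> V) Vs) J \<and> pos_density_nat J" for Vs
    using that indep_wrt_snd[of "\<lambda>n. T ^^ n" "\<lambda>n. S ^^ n" Vs] by (auto simp: funpow_map_prod)
  show "\<exists>J. indep_wrt (\<lambda>n. map_prod T S ^^ n) Ws J \<and> pos_density_nat J"
    if len: "length Us = k" "length Vs = k" "length Ws = k"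
      and sub: "\<And>i. i < k \<Longrightarrow> Us ! i \<times> Vs ! i \<subseteq> Ws ! i"
      and dense: "\<exists>J. indep_wrt (\<lambda>n. T ^^ n) Us J \<and> pos_density_nat J"
      "\<exists>J. indep_wrt (\<lambda>n. S ^^ n) Vs J \<and> pos_density_nat J"
    for Us Vs Ws
  proof -
    obtain J1 J2 where "indep_wrt (\<lambda>n. T ^^ n) Us J1" "pos_density_nat J1" "indep_wrt (\<lambda>n. S ^^ n) Vs J2" "pos_density_nat J2"
      using dense by blast
    moreover have "length Us = length Vs" using len by simp
    ultimately obtain K where "indep_wrt (\<lambda>n. map_prod T S ^^ n) (map2 (\<times>) Us Vs) K" "pos_density_nat K"
      using pos_density_indep_product_nat by blast
    then show ?thesis using indep_wrt_map2_times_mono[OF len sub] by blast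
  qed
qed

lemma IE_int_map_prod:
  fixes T :: "'a::topological_space \<Rightarrow> 'a" and S :: "'b::topological_space \<Rightarrow> 'b"
  assumes "bij T" "bij S"
  shows "(\<lambda>zs. (map fst zs, map snd zs)) ` IE_int k (map_prod T S) = IE_int k T \<times> IE_int k S"
  unfolding IE_int_eq_IE_with
proof (rule IE_with_product)
  show "\<exists>J. indep_wrt (int_act T) Us J \<and> pos_density_int J"
    if "\<exists>J. indep_wrt (int_act (map_prod T S)) (map (\<lambda>U. U \<times> UNIV) Us) J \<and> pos_density_int J" for Us
    using that indep_wrt_fst[of "int_act T" "int_act S" Us] by (auto simp: int_act_map_prod[OF assms])
  show "\<exists>J. indep_wrt (int_act S) Vs J \<and> pos_density_int J"
    if "\<exists>J. indep_wrt (int_act (map_prod T S)) (map (\<lambda>V. UNIV \<times> V) Vs) J \<and> pos_density_int J" for Vs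
    using that indep_wrt_snd[of "int_act T" "int_act S" Vs] by (auto simp: int_act_map_prod[OF assms])
  show "\<exists>J. indep_wrt (int_act (map_prod T S)) Ws J \<and> pos_density_int J"
    if len: "length Us = k" "length Vs = k" "length Ws = k"
      and sub: "\<And>i. i < k \<Longrightarrow> Us ! i \<times> Vs ! i \<subseteq> Ws ! i"
      and dense: "\<exists>J. indep_wrt (int_act T) Us J \<and> pos_density_int J"
      "\<exists>J. indep_wrt (int_act S) Vs J \<and> pos_density_int J"
    for Us Vs Ws
  proof -
    obtain J1 J2 where "indep_wrt (int_act T) Us J1" "pos_density_int J1" "indep_wrt (int_act S) Vs J2" "pos_density_int J2"
      using dense by blast
    moreover have "length Us = length Vs" using len by simp
    ultimately obtain K where "indep_wrt (int_act (map_prod T S)) (map2 (\<times>) Us Vs) K" "pos_density_int K"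
      using pos_density_indep_product_int[OF assms] by blast
    then show ?thesis using indep_wrt_map2_times_mono[OF len sub] by blast
  qed
qed

lemma homeomorphism_UNIV_bij: "homeomorphism UNIV UNIV f g \<Longrightarrow> bij f"
  unfolding homeomorphism_def by (intro o_bij[of g]) (auto simp: fun_eq_iff)

theorem theorem3p15:
  fixes T :: "'a::t2_space \<Rightarrow> 'a" and S :: "'b::t2_space \<Rightarrow> 'b" and k :: nat
  assumes "compact (UNIV :: 'a set)" and "compact (UNIV :: 'b set)"
    and "continuous_on UNIV T" and "continuous_on UNIV S"
    and "surj T" and "surj S"
    and "k \<ge> 1"
  shows "(\<lambda>zs. (map fst zs, map snd zs)) ` IE_nat k (map_prod T S) = IE_nat k T \<times> IE_nat k S
    \<and> ((\<exists>T'. homeomorphism UNIV UNIV T T') \<and> (\<exists>S'. homeomorphism UNIV UNIV S S') \<longrightarrow>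
         (\<lambda>zs. (map fst zs, map snd zs)) ` IE_int k (map_prod T S) = IE_int k T \<times> IE_int k S)"
proof (intro conjI impI)
  show "(\<lambda>zs. (map fst zs, map snd zs)) ` IE_nat k (map_prod T S) = IE_nat k T \<times> IE_nat k S"
    by (rule IE_nat_map_prod)
  assume "(\<exists>T'. homeomorphism UNIV UNIV T T') \<and> (\<exists>S'. homeomorphism UNIV UNIV S S')"
  then have "bij T" "bij S" using homeomorphism_UNIV_bij by blast+
  then show "(\<lambda>zs. (map fst zs, map snd zs)) ` IE_int k (map_prod T S) = IE_int k T \<times> IE_int k S"
    by (rule IE_int_map_prod)
qed

end
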